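(* An infinite countable locally finite abelian group $A$ possesses an increasing sequence $(Y_n)_{n=1}^\infty$ of finite subsets, each of which is individually $4$-incompressible, such that $|Y_{n-1}|<|Y_n|\le2|Y_{n-1}|$ for all $n$.
   Context: A group is locally finite if every finitely generated subgroup is finite. A finite set $Y\subseteq A$ containing $0$ is individually $C$-incompressible if for every sequence of translates $\{Y+f_i\}_{i=1}^I$ with $f_i\notin\bigcup_{j<i}(Y+f_j)$ for all $i$, the number of sets $Y+f_i$ containing $0$ is at most $C$. *)

theory Defs
  imports Main "HOL-Library.Countable_Set"
begin

definition gen_subgroup :: "'a::ab_group_add set \<Rightarrow> 'a set" where
  "gen_subgroup S = \<Inter>{H. S \<subseteq> H \<and> 0 \<in> H \<and> (\<forall>x\<in>H. \<forall>y\<in>H. x + y \<in> H) \<and> (\<forall>x\<in>H. - x \<in> H)}"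

definition locally_finite_group :: "'a::ab_group_add itself \<Rightarrow> bool" where
  "locally_finite_group _ \<longleftrightarrow> (\<forall>S::'a set. finite S \<longrightarrow> finite (gen_subgroup S))"

definition translate :: "'a::ab_group_add set \<Rightarrow> 'a \<Rightarrow> 'a set" where
  "translate Y f = (\<lambda>y. y + f) ` Y"

definition indiv_incompressible :: "nat \<Rightarrow> 'a::ab_group_add set \<Rightarrow> bool" where
  "indiv_incompressible C Y \<longleftrightarrow> finite Y \<and> 0 \<in> Y \<and>
     (\<forall>(f::nat \<Rightarrow> 'a) (I::nat).
        (\<forall>i\<in>{1..I}. f i \<notin> (\<Union>j\<in>{1..<i}. translate Y (f j))) \<longrightarrow>
        card {i\<in>{1..I}. 0 \<in> translate Y (f i)} \<le> C)"

end

(* Every set of the sequence is a coset progression K + B: K is a finite subgroup and B is either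
   a symmetric progression {-a g, ..., a g} or a pair {0, g}. Such a set is covered by two pieces,
   K + {0, g, ..., a g} and its negative, resp. the cosets K and K + g, whose internal differences
   stay inside the set; by pigeonhole a sequence of translates as in the definition contains 0 at
   most twice, so these sets are even individually 2-incompressible.

   The sequence grows by K ~> K + {0, e} with e outside K, K + {0, g} ~> K + {-g, 0, g} and
   K + {-a g..a g} ~> K + {-(a+1) g..(a+1) g}. Each step at most doubles the size, as the new set
   lies in the union of the translates of the old one by g and -g. A step can fail to enlarge the
   set only if the set is invariant under translation by g; then it coincides with its stabilizer,
   hence is a finite subgroup, and the first kind of step applies. *)

theory Submission
  imports Defs "HOL-Library.Set_Algebras"
begin

definition is_subgroup :: "'a::ab_group_add set \<Rightarrow> bool" where
  "is_subgroup H \<longleftrightarrow> 0 \<in> H \<and> (\<forall>x\<in>H. \<forall>y\<in>H. x + y \<in> H) \<and> (\<forall>x\<in>H. - x \<in> H)"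

lemma is_subgroupD:
  assumes "is_subgroup H"
  shows subgroup_zero: "0 \<in> H"
    and subgroup_add: "x \<in> H \<Longrightarrow> y \<in> H \<Longrightarrow> x + y \<in> H"
    and subgroup_uminus: "x \<in> H \<Longrightarrow> - x \<in> H"
  using assms unfolding is_subgroup_def by blast+

lemma subgroup_diff: "is_subgroup H \<Longrightarrow> x \<in> H \<Longrightarrow> y \<in> H \<Longrightarrow> x - y \<in> H"
  unfolding diff_conv_add_uminus by (intro subgroup_add subgroup_uminus)

lemma gen_subgroup_eq: "gen_subgroup S = \<Inter>{H. S \<subseteq> H \<and> is_subgroup H}"
  unfolding gen_subgroup_def is_subgroup_def by simp

lemma is_subgroup_Inter: "(\<And>H. H \<in> \<H> \<Longrightarrow> is_subgroup H) \<Longrightarrow> is_subgroup (\<Inter>\<H>)"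
  unfolding is_subgroup_def by auto

lemma gen_subgroup_least: "S \<subseteq> H \<Longrightarrow> is_subgroup H \<Longrightarrow> gen_subgroup S \<subseteq> H"
  unfolding gen_subgroup_eq by auto

lemma is_subgroup_gen_subgroup: "is_subgroup (gen_subgroup S)"
  unfolding gen_subgroup_eq by (rule is_subgroup_Inter) auto

lemma gen_subgroup_superset: "S \<subseteq> gen_subgroup S"
  unfolding gen_subgroup_eq by auto

lemma gen_subgroup_mono: "S \<subseteq> T \<Longrightarrow> gen_subgroup S \<subseteq> gen_subgroup T"
  unfolding gen_subgroup_eq by auto

lemma gen_subgroup_uminus: "gen_subgroup {- g} = gen_subgroup {g}"
proof -
  have "gen_subgroup {- h} \<subseteq> gen_subgroup {h}" for h :: 'a
    using subgroup_uminus[OF is_subgroup_gen_subgroup] gen_subgroup_superset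
    by (intro gen_subgroup_least is_subgroup_gen_subgroup) blast
  from this[of g] this[of "- g"] show ?thesis
    by simp
qed

lemma set_plus_singleton: "A + {b} = (\<lambda>x. x + b) ` A"
  unfolding set_plus_def by auto

lemma mem_set_plus_singleton:
  fixes x b :: "'a::ab_group_add"
  shows "x \<in> A + {b} \<longleftrightarrow> x - b \<in> A"
proof
  assume "x - b \<in> A"
  then have "(x - b) + b \<in> A + {b}"
    by (rule set_plus_intro) simp
  then show "x \<in> A + {b}"
    by simp
qed (auto simp: set_plus_singleton)

lemma set_plus_subset_subgroup:
  "is_subgroup H \<Longrightarrow> A \<subseteq> H \<Longrightarrow> B \<subseteq> H \<Longrightarrow> A + B \<subseteq> H"
  by (auto elim!: set_plus_elim intro: subgroup_add)

lemma subgroup_plus_mem: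
  assumes "is_subgroup K" "k \<in> K"
  shows "K + {k} = K"
proof (intro set_eqI iffI)
  fix x assume "x \<in> K + {k}"
  then have "(x - k) + k \<in> K"
    using assms by (intro subgroup_add) (simp_all add: mem_set_plus_singleton)
  then show "x \<in> K"
    by simp
next
  fix x assume "x \<in> K"
  then show "x \<in> K + {k}"
    using assms by (simp add: mem_set_plus_singleton subgroup_diff)
qed

lemma zero_in_subgroup_plus: "is_subgroup K \<Longrightarrow> 0 \<in> B \<Longrightarrow> 0 \<in> K + B"
  using set_plus_intro[OF subgroup_zero] by fastforce

lemma set_plus_subgroup_diff:
  assumes "is_subgroup K" "x \<in> K + B" "y \<in> K + B"
    and "\<And>b b'. b \<in> B \<Longrightarrow> b' \<in> B \<Longrightarrow> b - b' \<in> D"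
  shows "x - y \<in> K + D"
proof -
  obtain k b k' b' where "x = k + b" "y = k' + b'" "k \<in> K" "k' \<in> K" "b \<in> B" "b' \<in> B"
    using assms(2,3) by (auto elim!: set_plus_elim)
  then have "x - y = (k - k') + (b - b')" "k - k' \<in> K" "b - b' \<in> D"
    using assms(1,4) subgroup_diff by (auto simp: algebra_simps)
  then show ?thesis by auto
qed

subsection \<open>Incompressibility from a cover by difference-closed pieces\<close>

lemma indiv_incompressible_mono:
  "indiv_incompressible C Y \<Longrightarrow> C \<le> D \<Longrightarrow> indiv_incompressible D Y"
  unfolding indiv_incompressible_def using order_trans by blast

lemma indiv_incompressible_if_cover:
  fixes Y :: "'a::ab_group_add set"
  assumes "finite Y" "0 \<in> Y" and cover: "Y \<subseteq> \<Union>\<P>" "finite \<P>" "card \<P> \<le> C"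
    and diff: "\<And>P x y. P \<in> \<P> \<Longrightarrow> x \<in> P \<Longrightarrow> y \<in> P \<Longrightarrow> x - y \<in> Y"
  shows "indiv_incompressible C Y"
  unfolding indiv_incompressible_def
proof (intro conjI assms(1,2) allI impI)
  fix f :: "nat \<Rightarrow> 'a" and I
  assume fresh: "\<forall>i\<in>{1..I}. f i \<notin> (\<Union>j\<in>{1..<i}. translate Y (f j))"
  let ?S = "{i\<in>{1..I}. 0 \<in> translate Y (f i)}"
  have "\<forall>i\<in>?S. \<exists>P\<in>\<P>. - f i \<in> P"
    using cover(1) unfolding translate_def by (auto simp: add_eq_0_iff2)
  then obtain \<phi> where \<phi>: "\<And>i. i \<in> ?S \<Longrightarrow> \<phi> i \<in> \<P> \<and> - f i \<in> \<phi> i"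
    by (metis (no_types, lifting))
  have separated: "\<phi> i \<noteq> \<phi> j" if "i \<in> ?S" "j \<in> ?S" "i < j" for i j
  proof
    assume "\<phi> i = \<phi> j"
    then have "- f i - - f j \<in> Y"
      using \<phi>[OF that(1)] \<phi>[OF that(2)] \<open>\<phi> i = \<phi> j\<close> by (intro diff[of "\<phi> i"]) auto
    then have "f j \<in> translate Y (f i)"
      unfolding translate_def by (rule rev_image_eqI) simp
    with fresh that show False by auto
  qed
  have "inj_on \<phi> ?S"
  proof (rule inj_onI, rule ccontr)
    fix i j assume "i \<in> ?S" "j \<in> ?S" "\<phi> i = \<phi> j" "i \<noteq> j"
    then show False
      using separated[of i j] separated[of j i] by (auto simp: linorder_neq_iff)
  qed
  then have "card ?S = card (\<phi> ` ?S)"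
    by (simp add: card_image)
  also have "\<dots> \<le> card \<P>"
    using \<phi> cover(2) by (intro card_mono) auto
  finally show "card ?S \<le> C"
    using cover(3) by linarith
qed

subsection \<open>Symmetric progressions\<close>

fun multiple :: "nat \<Rightarrow> 'a::monoid_add \<Rightarrow> 'a" where
  "multiple 0 g = 0"
| "multiple (Suc n) g = multiple n g + g"

lemma multiple_add: "multiple (m + n) g = multiple m g + multiple n g"
  by (induction n) (simp_all add: add.assoc)

lemma multiple_mem_subgroup: "is_subgroup H \<Longrightarrow> g \<in> H \<Longrightarrow> multiple n g \<in> H"
  by (induction n) (simp_all add: subgroup_zero subgroup_add)

definition progression :: "'a::monoid_add \<Rightarrow> nat \<Rightarrow> 'a set" where
  "progression g a = (\<lambda>i. multiple i g) ` {..a}"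

definition sym_progression :: "'a::ab_group_add \<Rightarrow> nat \<Rightarrow> 'a set" where
  "sym_progression g a = progression g a \<union> uminus ` progression g a"

lemma sym_progressionE:
  assumes "x \<in> sym_progression g a"
  obtains i where "i \<le> a" "x = multiple i g" | i where "i \<le> a" "x = - multiple i g"
  using assms unfolding sym_progression_def progression_def by auto

lemma multiple_in_sym_progression:
  "i \<le> a \<Longrightarrow> multiple i g \<in> sym_progression g a"
  "i \<le> a \<Longrightarrow> - multiple i g \<in> sym_progression g a"
  unfolding sym_progression_def progression_def by auto

lemma finite_sym_progression: "finite (sym_progression g a)"
  unfolding sym_progression_def progression_def by simp

lemma zero_in_sym_progression: "0 \<in> sym_progression g a"
  using multiple_in_sym_progression(1)[of 0] by simp

lemma sym_progression_0: "sym_progression g 0 = {0}"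
  unfolding sym_progression_def progression_def by simp

lemma sym_progression_1: "sym_progression g 1 = {- g, 0, g}"
  unfolding sym_progression_def progression_def by (auto simp: atMost_Suc)

lemma sym_progression_mono: "a \<le> b \<Longrightarrow> sym_progression g a \<subseteq> sym_progression g b"
  unfolding sym_progression_def progression_def by auto

lemma sym_progression_subset_gen_subgroup: "sym_progression g a \<subseteq> gen_subgroup {g}"
proof
  have multiple: "multiple i g \<in> gen_subgroup {g}" for i
    using multiple_mem_subgroup[OF is_subgroup_gen_subgroup] gen_subgroup_superset by blast
  fix x assume "x \<in> sym_progression g a"
  then show "x \<in> gen_subgroup {g}"
  proof (cases rule: sym_progressionE)
    case (1 i)
    then show ?thesis using multiple by simp
  next
    case (2 i)
    then show ?thesis using subgroup_uminus[OF is_subgroup_gen_subgroup multiple] by simp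
  qed
qed

lemma progression_diff:
  assumes "x \<in> progression g a" "y \<in> progression g a"
  shows "x - y \<in> sym_progression g a"
proof -
  obtain i j where ij: "i \<le> a" "j \<le> a" "x = multiple i g" "y = multiple j g"
    using assms unfolding progression_def by auto
  show ?thesis
  proof (cases "j \<le> i")
    case True
    then have "x - y = multiple (i - j) g"
      using ij multiple_add[of j "i - j" g] by (simp add: algebra_simps)
    then show ?thesis using ij by (simp add: multiple_in_sym_progression)
  next
    case False
    then have "x - y = - multiple (j - i) g"
      using ij multiple_add[of i "j - i" g] by (simp add: algebra_simps)
    then show ?thesis using ij by (simp add: multiple_in_sym_progression)
  qed
qed

lemma sym_progression_shift_subset:
  "sym_progression g a + {- g} \<subseteq> sym_progression g (Suc a)"
proof
  fix x assume "x \<in> sym_progression g a + {- g}"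
  then have "x + g \<in> sym_progression g a"
    by (simp add: mem_set_plus_singleton)
  then show "x \<in> sym_progression g (Suc a)"
  proof (cases rule: sym_progressionE)
    case (1 i)
    then have x: "x = multiple i g - g"
      by (simp add: algebra_simps)
    show ?thesis
    proof (cases i)
      case 0
      then show ?thesis
        using x multiple_in_sym_progression(2)[of 1 "Suc a" g] by simp
    next
      case (Suc j)
      then show ?thesis
        using x 1 multiple_in_sym_progression(1)[of j "Suc a" g] by simp
    qed
  next
    case (2 i)
    then have "x = - multiple i g - g"
      by (simp add: eq_diff_eq)
    then have "x = - multiple (Suc i) g"
      by simp
    then show ?thesis
      using 2 multiple_in_sym_progression(2)[of "Suc i" "Suc a" g] by simp
  qed
qed

lemma sym_progression_Suc_subset:
  assumes "1 \<le> a"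
  shows "sym_progression g (Suc a) \<subseteq> (sym_progression g a + {g}) \<union> (sym_progression g a + {- g})"
proof
  have g: "g \<in> sym_progression g a"
    using assms multiple_in_sym_progression(1)[of 1 a g] by simp
  fix x assume "x \<in> sym_progression g (Suc a)"
  then have "x - g \<in> sym_progression g a \<or> x + g \<in> sym_progression g a"
  proof (cases rule: sym_progressionE)
    case (1 i)
    then show ?thesis
    proof (cases i)
      case 0
      then show ?thesis using 1 g by simp
    next
      case (Suc j)
      then show ?thesis using 1 multiple_in_sym_progression(1)[of j a g] by simp
    qed
  next
    case (2 i)
    then show ?thesis
    proof (cases i)
      case 0
      then show ?thesis using 2 g by simp
    next
      case (Suc j)
      then have "x = - multiple j g - g"
        using 2 by simp
      then have "x + g = - multiple j g"
        by simp
      then show ?thesis using 2 Suc multiple_in_sym_progression(2)[of j a g] by simp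
    qed
  qed
  then show "x \<in> (sym_progression g a + {g}) \<union> (sym_progression g a + {- g})"
    by (simp add: mem_set_plus_singleton)
qed

subsection \<open>Stabilizers\<close>

definition stabilizer :: "'a::ab_group_add set \<Rightarrow> 'a set" where
  "stabilizer X = {t. X + {t} = X}"

lemma singleton_plus_singleton: "{a} + {b} = {a + b}"
  unfolding set_plus_def by auto

lemma is_subgroup_stabilizer: "is_subgroup (stabilizer X)"
  unfolding is_subgroup_def
proof (intro conjI ballI)
  show "0 \<in> stabilizer X"
    by (simp add: stabilizer_def)
next
  fix s t assume "s \<in> stabilizer X" "t \<in> stabilizer X"
  then have "X + {s + t} = X"
    by (simp add: stabilizer_def flip: singleton_plus_singleton add.assoc)
  then show "s + t \<in> stabilizer X"
    by (simp add: stabilizer_def)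
next
  fix t assume "t \<in> stabilizer X"
  then have "X + {- t} = X + {t} + {- t}"
    by (simp add: stabilizer_def)
  also have "\<dots> = X"
    by (simp add: singleton_plus_singleton add.assoc)
  finally show "- t \<in> stabilizer X"
    by (simp add: stabilizer_def)
qed

lemma stabilizer_subset: "0 \<in> X \<Longrightarrow> stabilizer X \<subseteq> X"
  unfolding stabilizer_def by (force simp: mem_set_plus_singleton)

lemma mem_stabilizerI: "finite X \<Longrightarrow> X + {t} \<subseteq> X \<Longrightarrow> t \<in> stabilizer X"
  unfolding stabilizer_def by (simp add: card_subset_eq card_plus_sing)

lemma subgroup_subset_stabilizer:
  assumes "is_subgroup K"
  shows "K \<subseteq> stabilizer (K + B)"
proof
  fix k assume "k \<in> K"
  have "K + B + {k} = (K + {k}) + B"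
    by (simp add: ac_simps)
  also have "\<dots> = K + B"
    using subgroup_plus_mem[OF assms \<open>k \<in> K\<close>] by simp
  finally show "k \<in> stabilizer (K + B)"
    by (simp add: stabilizer_def)
qed

lemma is_subgroup_if_stabilized:
  assumes "0 \<in> X" "X \<subseteq> gen_subgroup S" "S \<subseteq> stabilizer X"
  shows "is_subgroup X"
proof -
  have "gen_subgroup S \<subseteq> stabilizer X"
    by (rule gen_subgroup_least[OF assms(3) is_subgroup_stabilizer])
  then have "X = stabilizer X"
    using assms(1,2) stabilizer_subset by blast
  then show ?thesis
    using is_subgroup_stabilizer by metis
qed

subsection \<open>Coset progressions\<close>

text \<open>Besides the symmetric coset progressions, the sets K + {0, g} are admitted as intermediate
  stages: going from K directly to K + {-g, 0, g} may triple the size.\<close>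

definition coset_progression :: "'a::ab_group_add set \<Rightarrow> bool" where
  "coset_progression X \<longleftrightarrow> (\<exists>K g a. is_subgroup K \<and> finite K \<and>
     (X = K + sym_progression g a \<or> X = K + {0, g}))"

lemma coset_progression_finite: "coset_progression X \<Longrightarrow> finite X"
  unfolding coset_progression_def by (auto intro: finite_set_plus finite_sym_progression)

lemma coset_progression_zero: "coset_progression {0}"
proof -
  have "is_subgroup {0}"
    by (simp add: is_subgroup_def)
  then show ?thesis
    unfolding coset_progression_def using sym_progression_0 by fastforce
qed

lemma subgroup_plus_indiv_incompressible:
  fixes K B :: "'a::ab_group_add set"
  assumes K: "is_subgroup K" "finite K" and B: "finite B" "0 \<in> B"
    and cover: "B \<subseteq> \<Union>\<Q>" "finite \<Q>" "card \<Q> \<le> C"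
    and diff: "\<And>Q b b'. Q \<in> \<Q> \<Longrightarrow> b \<in> Q \<Longrightarrow> b' \<in> Q \<Longrightarrow> b - b' \<in> B"
  shows "indiv_incompressible C (K + B)"
proof (rule indiv_incompressible_if_cover)
  show "finite (K + B)"
    using K(2) B(1) by (rule finite_set_plus)
  show "0 \<in> K + B"
    using K(1) B(2) by (rule zero_in_subgroup_plus)
  show "K + B \<subseteq> \<Union>((\<lambda>Q. K + Q) ` \<Q>)"
    using cover(1) by (auto elim!: set_plus_elim)
  show "finite ((\<lambda>Q. K + Q) ` \<Q>)"
    using cover(2) by simp
  show "card ((\<lambda>Q. K + Q) ` \<Q>) \<le> C"
    using card_image_le[OF cover(2)] cover(3) by (rule order_trans)
  show "x - y \<in> K + B" if "P \<in> (\<lambda>Q. K + Q) ` \<Q>" "x \<in> P" "y \<in> P" for P x y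
    using that diff by (auto intro: set_plus_subgroup_diff[OF K(1)])
qed

lemma coset_progression_indiv_incompressible:
  assumes "coset_progression X"
  shows "indiv_incompressible 2 X"
proof -
  obtain K g a where K: "is_subgroup K" "finite K"
    and "X = K + sym_progression g a \<or> X = K + {0, g}"
    using assms unfolding coset_progression_def by blast
  then consider (sym) "X = K + sym_progression g a" | (two) "X = K + {0, g}"
    by blast
  then show ?thesis
  proof cases
    case sym
    let ?P = "progression g a"
    have "indiv_incompressible 2 (K + sym_progression g a)"
    proof (rule subgroup_plus_indiv_incompressible[OF K finite_sym_progression zero_in_sym_progression])
      show "sym_progression g a \<subseteq> \<Union>{?P, uminus ` ?P}"
        by (simp add: sym_progression_def)
      show "card {?P, uminus ` ?P} \<le> 2"
        by (simp add: card_insert_if)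
      show "b - b' \<in> sym_progression g a" if "Q \<in> {?P, uminus ` ?P}" "b \<in> Q" "b' \<in> Q" for Q b b'
        using that progression_diff by auto
    qed simp
    then show ?thesis
      by (simp add: sym)
  next
    case two
    have "indiv_incompressible 2 (K + {0, g})"
      by (rule subgroup_plus_indiv_incompressible[OF K, of _ "{{0}, {g}}"])
        (auto simp: card_insert_if)
    then show ?thesis
      by (simp add: two)
  qed
qed

lemma finite_subgroup_extend:
  fixes K :: "'a::ab_group_add set"
  assumes "infinite (UNIV :: 'a set)" "is_subgroup K" "finite K"
  shows "\<exists>X. coset_progression X \<and> K \<subset> X \<and> card X \<le> 2 * card K"
proof -
  obtain e where "e \<notin> K"
    using ex_new_if_finite assms(1,3) by blast
  have X: "K + {0, e} = K \<union> (K + {e})"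
    by (simp add: set_plus_insert Un_commute)
  have "coset_progression (K + {0, e})"
    using assms(2,3) unfolding coset_progression_def by blast
  moreover have "e \<in> K + {e}"
    using set_plus_intro[OF subgroup_zero[OF assms(2)], of e "{e}"] by simp
  then have "K \<subset> K + {0, e}"
    using \<open>e \<notin> K\<close> X by blast
  moreover have "card (K + {0, e}) \<le> 2 * card K"
    using card_Un_le[of K "K + {e}"] by (simp add: X card_plus_sing)
  ultimately show ?thesis
    by blast
qed

lemma subgroup_plus_is_subgroup_if_invariant:
  fixes K B :: "'a::ab_group_add set"
  assumes K: "is_subgroup K" "finite K"
    and B: "finite B" "0 \<in> B" "B \<subseteq> gen_subgroup {g}"
    and invariant: "K + B + {g} \<subseteq> K + B"
  shows "is_subgroup (K + B)"
proof (rule is_subgroup_if_stabilized[of _ "insert g K"])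
  show "0 \<in> K + B"
    using K(1) B(2) by (rule zero_in_subgroup_plus)
  show "K + B \<subseteq> gen_subgroup (insert g K)"
    using B(3) gen_subgroup_mono[of "{g}" "insert g K"] gen_subgroup_superset[of "insert g K"]
    by (intro set_plus_subset_subgroup[OF is_subgroup_gen_subgroup]) auto
  have "g \<in> stabilizer (K + B)"
    using finite_set_plus[OF K(2) B(1)] invariant by (rule mem_stabilizerI)
  then show "insert g K \<subseteq> stabilizer (K + B)"
    using subgroup_subset_stabilizer[OF K(1)] by blast
qed

lemma subgroup_plus_extend:
  fixes K B B' :: "'a::ab_group_add set"
  assumes K: "is_subgroup K" "finite K"
    and B: "finite B" "0 \<in> B" "B \<subseteq> gen_subgroup {g}"
    and B': "B \<subseteq> B'" "B + {- g} \<subseteq> B'" "B' \<subseteq> (B + {g}) \<union> (B + {- g})"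
    and not_subgroup: "\<not> is_subgroup (K + B)"
  shows "K + B \<subset> K + B'" "card (K + B') \<le> 2 * card (K + B)"
proof -
  let ?X = "K + B"
  have "?X \<noteq> K + B'"
  proof
    assume eq: "?X = K + B'"
    have "K + B + {- g} = K + (B + {- g})"
      by (simp add: add.assoc)
    also have "\<dots> \<subseteq> K + B'"
      using B'(2) by (intro set_plus_mono2) auto
    finally have "K + B + {- g} \<subseteq> K + B"
      using eq by simp
    moreover have "B \<subseteq> gen_subgroup {- g}"
      using B(3) by (simp add: gen_subgroup_uminus)
    ultimately have "is_subgroup ?X"
      by (intro subgroup_plus_is_subgroup_if_invariant[OF K B(1,2)])
    with not_subgroup show False ..
  qed
  then show "K + B \<subset> K + B'"
    using set_plus_mono2[OF order_refl B'(1)] by blast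
  have "K + B' \<subseteq> (?X + {g}) \<union> (?X + {- g})"
    using set_plus_mono2[OF order_refl B'(3), of K] by (simp add: set_plus_Un add.assoc)
  then have "card (K + B') \<le> card (?X + {g}) + card (?X + {- g})"
    using finite_set_plus[OF K(2) B(1)]
    by (intro order_trans[OF card_mono card_Un_le]) (auto intro: finite_set_plus)
  then show "card (K + B') \<le> 2 * card ?X"
    by (simp add: card_plus_sing)
qed

lemma coset_progression_extend:
  fixes X :: "'a::ab_group_add set"
  assumes "infinite (UNIV :: 'a set)" "coset_progression X"
  shows "\<exists>X'. coset_progression X' \<and> X \<subset> X' \<and> card X' \<le> 2 * card X"
proof (cases "is_subgroup X")
  case True
  then show ?thesis
    using finite_subgroup_extend[OF assms(1)] coset_progression_finite[OF assms(2)] by blast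
next
  case False
  obtain K g a where K: "is_subgroup K" "finite K"
    and "X = K + sym_progression g a \<or> X = K + {0, g}"
    using assms(2) unfolding coset_progression_def by blast
  moreover have next_stage: "coset_progression (K + sym_progression g b)" for b
    using K unfolding coset_progression_def by blast
  ultimately consider (sym) "X = K + sym_progression g a" | (two) "X = K + {0, g}"
    by blast
  then show ?thesis
  proof cases
    case sym
    with False K(1) have "1 \<le> a"
      by (cases a) (auto simp: sym_progression_0)
    let ?X' = "K + sym_progression g (Suc a)"
    have "X \<subset> ?X' \<and> card ?X' \<le> 2 * card X"
      using \<open>1 \<le> a\<close> subgroup_plus_extend[OF K finite_sym_progression zero_in_sym_progression
          sym_progression_subset_gen_subgroup sym_progression_mono[of a "Suc a"]
          sym_progression_shift_subset sym_progression_Suc_subset] False sym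
      by simp
    then show ?thesis
      using next_stage by blast
  next
    case two
    have "{0, g} \<subseteq> gen_subgroup {g}"
      using subgroup_zero[OF is_subgroup_gen_subgroup] gen_subgroup_superset by blast
    then have "X \<subset> K + sym_progression g 1 \<and> card (K + sym_progression g 1) \<le> 2 * card X"
      using subgroup_plus_extend[OF K, of "{0, g}" g "{- g, 0, g}"] False two
      unfolding sym_progression_1 by (simp add: set_plus_singleton insert_commute)
    then show ?thesis
      using next_stage by blast
  qed
qed

theorem proposition2p11:
  assumes "infinite (UNIV :: 'a::ab_group_add set)"
    and "countable (UNIV :: 'a set)"
    and "locally_finite_group TYPE('a)"
  shows "\<exists>Y :: nat \<Rightarrow> 'a set.
           (\<forall>n\<ge>1. finite (Y n) \<and> indiv_incompressible 4 (Y n)) \<and>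
           (\<forall>n\<ge>2. Y (n - 1) \<subseteq> Y n \<and> card (Y (n - 1)) < card (Y n) \<and>
                   card (Y n) \<le> 2 * card (Y (n - 1)))"
proof -
  obtain Y :: "nat \<Rightarrow> 'a set" where Y: "\<And>n. coset_progression (Y n)"
    and grow: "\<And>n. Y n \<subset> Y (Suc n) \<and> card (Y (Suc n)) \<le> 2 * card (Y n)"
    using dependent_nat_choice[of "\<lambda>_. coset_progression"
        "\<lambda>_ X X'. X \<subset> X' \<and> card X' \<le> 2 * card X"]
      coset_progression_zero coset_progression_extend[OF assms(1)]
    by metis
  have "finite (Y n) \<and> indiv_incompressible 4 (Y n)" for n
    using coset_progression_finite[OF Y]
      indiv_incompressible_mono[OF coset_progression_indiv_incompressible[OF Y], of 4]
    by simp
  moreover have "Y (n - 1) \<subseteq> Y n \<and> card (Y (n - 1)) < card (Y n) \<and>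
      card (Y n) \<le> 2 * card (Y (n - 1))" if "n \<ge> 2" for n
  proof -
    from \<open>n \<ge> 2\<close> obtain m where n: "n = Suc m"
      by (cases n) auto
    show ?thesis
      using grow[of m] psubset_card_mono[OF coset_progression_finite[OF Y]] by (auto simp: n)
  qed
  ultimately show ?thesis
    by blast
qed

end
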